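(* Let $X$ be a finite graded poset and let $f\colon X\to\mathbb R$ be a Morse function satisfying the Exclusion condition. Then there exists an order preserving Morse function $f'\colon X\to\mathbb R$ (i.e. $x\le y\Rightarrow f'(x)\le f'(y)$) satisfying the Exclusion condition and having the same associated Morse matching as $f$, i.e. $\mathcal M_{f'}=\mathcal M_f$.
   Context: In a poset, write $a\prec b$ if $a<b$ and there is no $c$ with $a<c<b$. A chain $x_0<\dots<x_n$ has length $n$; a poset is homogeneous of degree $n$ if all its maximal chains have length $n$; $X$ is graded if $U_x=\{y:y\le x\}$ is homogeneous for every $x$. A Morse function on a finite poset $X$ is a map $f\colon X\to\mathbb R$ such that for every $x$, $\#\{y: x\prec y,\ f(x)\ge f(y)\}\le1$ and $\#\{w: w\prec x,\ f(w)\ge f(x)\}\le 1$; $x$ is critical if both sets are empty, regular otherwise. $f$ satisfies the Exclusion condition if for every regular $x$ exactly one of these two sets is nonempty. The associated matching is $\mathcal M_f=\{(w,x): w\prec x,\ f(w)\ge f(x)\}$. *)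

theory Defs
  imports Complex_Main
begin

text \<open>A (finite) poset is modelled as a carrier set X of a type with a partial order;
  the order on X is the restriction of the ambient order.\<close>

definition covers :: "'a::order set \<Rightarrow> 'a \<Rightarrow> 'a \<Rightarrow> bool" where
  "covers X a b \<longleftrightarrow> a \<in> X \<and> b \<in> X \<and> a < b \<and> \<not> (\<exists>c\<in>X. a < c \<and> c < b)"

definition is_chain :: "'a::order set \<Rightarrow> 'a list \<Rightarrow> bool" where
  "is_chain S xs \<longleftrightarrow> xs \<noteq> [] \<and> set xs \<subseteq> S \<and> sorted_wrt (<) xs"

definition chain_length :: "'a list \<Rightarrow> nat" where
  "chain_length xs = length xs - 1"

definition maximal_chain :: "'a::order set \<Rightarrow> 'a list \<Rightarrow> bool" where
  "maximal_chain S xs \<longleftrightarrow> is_chain S xs \<and>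
     (\<forall>ys. is_chain S ys \<and> set xs \<subseteq> set ys \<longrightarrow> set ys = set xs)"

definition homogeneous_of_degree :: "'a::order set \<Rightarrow> nat \<Rightarrow> bool" where
  "homogeneous_of_degree S n \<longleftrightarrow> (\<forall>xs. maximal_chain S xs \<longrightarrow> chain_length xs = n)"

definition homogeneous :: "'a::order set \<Rightarrow> bool" where
  "homogeneous S \<longleftrightarrow> (\<exists>n. homogeneous_of_degree S n)"

definition down_set :: "'a::order set \<Rightarrow> 'a \<Rightarrow> 'a set" where
  "down_set X x = {y \<in> X. y \<le> x}"

definition graded :: "'a::order set \<Rightarrow> bool" where
  "graded X \<longleftrightarrow> (\<forall>x\<in>X. homogeneous (down_set X x))"

definition up_low :: "'a::order set \<Rightarrow> ('a \<Rightarrow> real) \<Rightarrow> 'a \<Rightarrow> 'a set" where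
  "up_low X f x = {y. covers X x y \<and> f x \<ge> f y}"

definition down_high :: "'a::order set \<Rightarrow> ('a \<Rightarrow> real) \<Rightarrow> 'a \<Rightarrow> 'a set" where
  "down_high X f x = {w. covers X w x \<and> f w \<ge> f x}"

definition morse_function :: "'a::order set \<Rightarrow> ('a \<Rightarrow> real) \<Rightarrow> bool" where
  "morse_function X f \<longleftrightarrow>
     (\<forall>x\<in>X. card (up_low X f x) \<le> 1 \<and> card (down_high X f x) \<le> 1)"

definition critical :: "'a::order set \<Rightarrow> ('a \<Rightarrow> real) \<Rightarrow> 'a \<Rightarrow> bool" where
  "critical X f x \<longleftrightarrow> up_low X f x = {} \<and> down_high X f x = {}"

definition exclusion_condition :: "'a::order set \<Rightarrow> ('a \<Rightarrow> real) \<Rightarrow> bool" where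
  "exclusion_condition X f \<longleftrightarrow>
     (\<forall>x\<in>X. \<not> critical X f x \<longrightarrow>
        ((up_low X f x \<noteq> {}) \<noteq> (down_high X f x \<noteq> {})))"

definition morse_matching :: "'a::order set \<Rightarrow> ('a \<Rightarrow> real) \<Rightarrow> ('a \<times> 'a) set" where
  "morse_matching X f = {(w, x). covers X w x \<and> f w \<ge> f x}"

end

theory Submission
  imports Defs
begin

text \<open>In a finite graded poset the rank grows by exactly one along every cover. Let
  f'(x) = rank x for critical x, and give both ends of a matched cover w \<prec> x the value
  rank w + 1/2 + s(f w), where s is strictly increasing with values in (-1/4, 1/4). Along an
  unmatched cover a \<prec> b the rank alone makes f' go up, except when a and b are the lower and the
  upper end of two different matched pairs; then f a < f b \<le> f d for the partner d of b, and s
  decides. Hence f' increases weakly along covers and is constant exactly on the matched ones, so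
  f and f' have the same up and down sets and the same matching; in a finite poset monotonicity
  along covers is order preservation.\<close>

lemma sorted_wrt_less_distinct: "sorted_wrt (<) (xs :: 'a::order list) \<Longrightarrow> distinct xs"
  by (induction xs) auto

lemma sorted_wrt_less_comparable:
  "sorted_wrt (<) (xs :: 'a::order list) \<Longrightarrow> u \<in> set xs \<Longrightarrow> v \<in> set xs \<Longrightarrow> u < v \<or> u = v \<or> v < u"
  by (induction xs) auto

lemma maximal_chainI:
  "is_chain S xs \<Longrightarrow> (\<And>ys. is_chain S ys \<Longrightarrow> set xs \<subseteq> set ys \<Longrightarrow> set ys = set xs)
    \<Longrightarrow> maximal_chain S xs"
  unfolding maximal_chain_def by blast

lemma maximal_chainD:
  assumes "maximal_chain S xs"
  shows "xs \<noteq> []" "set xs \<subseteq> S" "sorted_wrt (<) xs"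
    and "is_chain S ys \<Longrightarrow> set xs \<subseteq> set ys \<Longrightarrow> set ys = set xs"
  using assms by (simp_all add: maximal_chain_def is_chain_def)

lemma maximal_chain_exists:
  fixes S :: "'a::order set"
  assumes "finite S" "x \<in> S"
  obtains xs where "maximal_chain S xs"
proof -
  let ?P = "\<lambda>n. \<exists>xs. is_chain S xs \<and> length xs = n"
  have "?P 1" using assms by (intro exI[of _ "[x]"]) (auto simp: is_chain_def)
  moreover have "n \<le> card S" if "?P n" for n
  proof -
    obtain xs where "is_chain S xs" "length xs = n" using \<open>?P n\<close> by blast
    then have "distinct xs" "set xs \<subseteq> S" by (auto simp: is_chain_def sorted_wrt_less_distinct)
    then show ?thesis using \<open>length xs = n\<close> assms(1) by (metis card_mono distinct_card)
  qed
  ultimately obtain n where n: "?P n" "\<And>m. ?P m \<Longrightarrow> m \<le> n"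
    using Nat.ex_has_greatest_nat[of ?P 1 "card S"] by blast
  then obtain xs where xs: "is_chain S xs" "length xs = n" by blast
  have "maximal_chain S xs"
  proof (rule maximal_chainI[OF xs(1)])
    fix ys assume ys: "is_chain S ys" "set xs \<subseteq> set ys"
    have "distinct xs" "distinct ys" using xs ys by (auto simp: is_chain_def sorted_wrt_less_distinct)
    then have "card (set ys) \<le> card (set xs)" using n(2) ys xs by (auto simp: distinct_card)
    then show "set ys = set xs" using ys card_seteq[of "set ys" "set xs"] by auto
  qed
  then show thesis by (rule that)
qed

lemma maximal_chain_down_set_mem:
  assumes xs: "maximal_chain (down_set X a) xs" and "a \<in> X"
  shows "a \<in> set xs"
proof (rule ccontr)
  assume a: "a \<notin> set xs"
  have "x < a" if "x \<in> set xs" for x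
  proof -
    have "x \<le> a" using that maximal_chainD(2)[OF xs] by (auto simp: down_set_def)
    moreover have "x \<noteq> a" using that a by blast
    ultimately show ?thesis by simp
  qed
  then have "sorted_wrt (<) (xs @ [a])" using maximal_chainD(3)[OF xs] by (simp add: sorted_wrt_append)
  moreover have "set (xs @ [a]) \<subseteq> down_set X a"
    using maximal_chainD(2)[OF xs] \<open>a \<in> X\<close> by (simp add: down_set_def)
  ultimately have "is_chain (down_set X a) (xs @ [a])" by (simp add: is_chain_def)
  then have "set (xs @ [a]) = set xs" by (rule maximal_chainD(4)[OF xs]) auto
  moreover have "a \<in> set (xs @ [a])" by simp
  ultimately show False using a by simp
qed

lemma maximal_chain_down_set_covers:
  assumes cv: "covers X a b" and xs: "maximal_chain (down_set X a) xs"
  shows "maximal_chain (down_set X b) (xs @ [b])"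
proof (rule maximal_chainI)
  have aX: "a \<in> X" and bX: "b \<in> X" and ab: "a < b" and between: "\<not> (\<exists>c\<in>X. a < c \<and> c < b)"
    using cv by (auto simp: covers_def)
  note xsc = maximal_chainD(2,3)[OF xs]
  have "x < b" if "x \<in> set xs" for x
    using that xsc(1) ab by (auto simp: down_set_def intro: le_less_trans)
  then show "is_chain (down_set X b) (xs @ [b])"
    using xsc ab bX by (auto simp: is_chain_def sorted_wrt_append down_set_def)
  fix ys assume ys: "is_chain (down_set X b) ys" "set (xs @ [b]) \<subseteq> set ys"
  let ?ys' = "filter (\<lambda>z. z \<noteq> b) ys"
  have ysc: "set ys \<subseteq> down_set X b" "sorted_wrt (<) ys" using ys(1) by (simp_all add: is_chain_def)
  have "a \<in> set ys" using ys(2) maximal_chain_down_set_mem[OF xs aX] by auto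
  \<comment> \<open>ys is a chain through a, and nothing lies strictly between a and b\<close>
  have "z \<le> a" if "z \<in> set ?ys'" for z
  proof -
    have "z \<in> X" "z < b" using that ysc(1) by (auto simp: down_set_def)
    with between sorted_wrt_less_comparable[OF ysc(2) _ \<open>a \<in> set ys\<close>, of z] that
    show ?thesis by auto
  qed
  moreover have "?ys' \<noteq> []" using \<open>a \<in> set ys\<close> ab by (auto simp: filter_empty_conv)
  ultimately have "is_chain (down_set X a) ?ys'"
    using ysc by (auto simp: is_chain_def down_set_def sorted_wrt_filter)
  moreover have "set xs \<subseteq> set ?ys'" using ys(2) xsc(1) ab by (auto simp: down_set_def)
  ultimately have "set ?ys' = set xs" by (rule maximal_chainD(4)[OF xs])
  then show "set ys = set (xs @ [b])" using ys(2) by auto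
qed

definition poset_rank :: "'a::order set \<Rightarrow> 'a \<Rightarrow> nat" where
  "poset_rank X x = (SOME n. homogeneous_of_degree (down_set X x) n)"

lemma poset_rank_eq_chain_length:
  assumes "graded X" "x \<in> X" "maximal_chain (down_set X x) xs"
  shows "poset_rank X x = chain_length xs"
proof -
  obtain n where "homogeneous_of_degree (down_set X x) n"
    using assms(1,2) unfolding graded_def homogeneous_def by blast
  then have "homogeneous_of_degree (down_set X x) (poset_rank X x)"
    unfolding poset_rank_def by (rule someI)
  then show ?thesis using assms(3) unfolding homogeneous_of_degree_def by simp
qed

lemma poset_rank_covers:
  assumes "finite X" "graded X" and cv: "covers X a b"
  shows "poset_rank X b = poset_rank X a + 1"
proof -
  have aX: "a \<in> X" and bX: "b \<in> X" using cv by (auto simp: covers_def)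
  obtain xs where xs: "maximal_chain (down_set X a) xs"
    using maximal_chain_exists[of "down_set X a" a] assms(1) aX by (auto simp: down_set_def)
  from maximal_chainD(1)[OF xs] poset_rank_eq_chain_length[OF assms(2) aX xs]
    poset_rank_eq_chain_length[OF assms(2) bX maximal_chain_down_set_covers[OF cv xs]]
  show ?thesis by (simp add: chain_length_def)
qed

lemma exists_cover_below:
  assumes "finite X" "x \<in> X" "y \<in> X" "x < y"
  obtains m where "covers X x m" "m \<le> y"
proof -
  let ?S = "{z\<in>X. x < z \<and> z \<le> y}"
  have "y \<in> ?S" using assms by simp
  then obtain m where m: "m \<in> ?S" "\<And>z. z \<in> ?S \<Longrightarrow> z \<le> m \<Longrightarrow> m = z"
    using finite_has_minimal[of ?S] assms(1) by auto
  then have "covers X x m" using assms(2) by (fastforce simp: covers_def)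
  then show thesis using that m(1) by blast
qed

lemma monotone_if_monotone_on_covers:
  fixes g :: "'a::order \<Rightarrow> 'b::preorder"
  assumes "finite X" and cov: "\<And>a b. covers X a b \<Longrightarrow> g a \<le> g b"
  shows "x \<in> X \<Longrightarrow> y \<in> X \<Longrightarrow> x \<le> y \<Longrightarrow> g x \<le> g y"
proof (induction "card {z\<in>X. x < z \<and> z \<le> y}" arbitrary: x rule: less_induct)
  case less
  show ?case
  proof (cases "x = y")
    case False
    then have "x < y" using less.prems(3) by simp
    then obtain m where m: "covers X x m" "m \<le> y"
      using exists_cover_below[OF assms(1) less.prems(1,2)] by blast
    have "m \<in> X" "x < m" using m(1) by (auto simp: covers_def)
    then have "{z\<in>X. m < z \<and> z \<le> y} \<subset> {z\<in>X. x < z \<and> z \<le> y}"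
      using m(2) by auto
    then have "card {z\<in>X. m < z \<and> z \<le> y} < card {z\<in>X. x < z \<and> z \<le> y}"
      using assms(1) by (simp add: psubset_card_mono)
    then have "g m \<le> g y" using less.hyps \<open>m \<in> X\<close> m(2) less.prems(2) by blast
    then show ?thesis using cov[OF m(1)] order_trans by blast
  qed simp
qed

lemma down_high_eq_singleton:
  assumes "finite X" "morse_function X f" and w: "w \<in> down_high X f x"
  shows "down_high X f x = {w}"
proof -
  have "x \<in> X" using w by (simp add: down_high_def covers_def)
  then have "card (down_high X f x) \<le> Suc 0" using assms(2) by (simp add: morse_function_def)
  moreover have "finite (down_high X f x)"
    using assms(1) by (rule rev_finite_subset) (auto simp: down_high_def covers_def)
  ultimately show ?thesis using w card_le_Suc0_iff_eq by blast
qed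

lemma morse_data_eq_if_same_cover_order:
  assumes "\<And>a b. covers X a b \<Longrightarrow> g b \<le> g a \<longleftrightarrow> f b \<le> f a"
  shows "up_low X g = up_low X f" "down_high X g = down_high X f"
    and "morse_matching X g = morse_matching X f"
proof -
  have "(covers X w x \<and> g x \<le> g w) \<longleftrightarrow> (covers X w x \<and> f x \<le> f w)" for w x
    using assms by blast
  then show "up_low X g = up_low X f" "down_high X g = down_high X f"
    and "morse_matching X g = morse_matching X f"
    unfolding up_low_def down_high_def morse_matching_def by simp_all
qed

definition squash :: "real \<Rightarrow> real" where
  "squash t = arctan t / (2 * pi)"

lemma squash_bounds: "- 1/4 < squash t" "squash t < 1/4"
  using arctan_bounded[of t] by (simp_all add: squash_def field_simps)

lemma squash_less_iff: "squash s < squash t \<longleftrightarrow> s < t"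
  by (simp add: squash_def field_simps arctan_less_iff)

definition rank_lift :: "'a::order set \<Rightarrow> ('a \<Rightarrow> real) \<Rightarrow> 'a \<Rightarrow> real" where
  "rank_lift X f x =
     (let pair_value = \<lambda>w. real (poset_rank X w) + 1/2 + squash (f w) in
      if up_low X f x \<noteq> {} then pair_value x
      else if down_high X f x \<noteq> {} then pair_value (the_elem (down_high X f x))
      else real (poset_rank X x))"

locale graded_exclusion_morse =
  fixes X :: "'a::order set" and f :: "'a \<Rightarrow> real"
  assumes finite: "finite X" and graded: "graded X"
    and morse: "morse_function X f" and exclusion: "exclusion_condition X f"
begin

abbreviation "rank \<equiv> poset_rank X"
abbreviation "lift \<equiv> rank_lift X f"

lemma rank_covers: "covers X a b \<Longrightarrow> rank b = rank a + 1"
  using poset_rank_covers[OF finite graded] .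

lemma lift_lower_end: "up_low X f x \<noteq> {} \<Longrightarrow> lift x = rank x + 1/2 + squash (f x)"
  by (simp add: rank_lift_def)

lemma lift_matched:
  assumes "covers X w x" "f x \<le> f w"
  shows "lift x = lift w"
proof -
  have w: "w \<in> down_high X f x" using assms by (simp add: down_high_def)
  have dh: "down_high X f x = {w}" using down_high_eq_singleton[OF finite morse w] .
  have "x \<in> X" using w by (simp add: down_high_def covers_def)
  then have "up_low X f x = {}"
    using exclusion dh unfolding exclusion_condition_def critical_def by auto
  moreover have "up_low X f w \<noteq> {}" using w by (auto simp: up_low_def down_high_def)
  ultimately show ?thesis using dh by (simp add: rank_lift_def)
qed

lemma lift_gt_rank: "rank x - 3/4 < lift x"
proof (cases "up_low X f x = {} \<and> down_high X f x \<noteq> {}")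
  case True
  then obtain w where w: "w \<in> down_high X f x" by blast
  then have "rank x = rank w + 1" using rank_covers[of w x] by (simp add: down_high_def)
  then show ?thesis
    using True down_high_eq_singleton[OF finite morse w] squash_bounds[of "f w"]
    by (simp add: rank_lift_def)
qed (use squash_bounds[of "f x"] in \<open>auto simp: rank_lift_def\<close>)

lemma lift_le_rank_if_not_lower:
  assumes "up_low X f x = {}"
  shows "lift x \<le> rank x"
proof (cases "down_high X f x = {}")
  case False
  then obtain w where w: "w \<in> down_high X f x" by blast
  then have "rank x = rank w + 1" using rank_covers[of w x] by (simp add: down_high_def)
  then show ?thesis
    using assms down_high_eq_singleton[OF finite morse w] squash_bounds[of "f w"]
    by (simp add: rank_lift_def)
qed (simp add: rank_lift_def assms)

lemma rank_le_lift_if_not_upper: "down_high X f x = {} \<Longrightarrow> rank x \<le> lift x"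
  using squash_bounds[of "f x"] by (auto simp: rank_lift_def)

lemma lift_less_covers:
  assumes cv: "covers X a b" and less: "f a < f b"
  shows "lift a < lift b"
proof (cases "up_low X f a = {}")
  case True
  then show ?thesis
    using lift_le_rank_if_not_lower[OF True] lift_gt_rank[of b] rank_covers[OF cv] by simp
next
  case lower: False
  have lift_a: "lift a = rank a + 1/2 + squash (f a)" using lift_lower_end[OF lower] .
  show ?thesis
  proof (cases "down_high X f b = {}")
    case True
    then show ?thesis
      using lift_a squash_bounds[of "f a"] rank_le_lift_if_not_upper[OF True] rank_covers[OF cv]
      by simp
  next
    case False
    then obtain d where "d \<in> down_high X f b" by blast
    then have cd: "covers X d b" "f b \<le> f d" by (simp_all add: down_high_def)
    have "up_low X f d \<noteq> {}" using cd by (auto simp: up_low_def)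
    then have "lift b = rank d + 1/2 + squash (f d)" using lift_matched[OF cd] lift_lower_end by simp
    moreover have "rank d = rank a" using rank_covers[OF cd(1)] rank_covers[OF cv] by simp
    ultimately show ?thesis using lift_a less cd(2) squash_less_iff[of "f a" "f d"] by simp
  qed
qed

lemma lift_le_covers:
  assumes "covers X a b"
  shows "lift a \<le> lift b"
proof (cases "f a < f b")
  case True
  then show ?thesis using lift_less_covers[OF assms] by simp
qed (use lift_matched[OF assms] in simp)

lemma lift_cover_order_iff:
  assumes "covers X a b"
  shows "lift b \<le> lift a \<longleftrightarrow> f b \<le> f a"
proof (cases "f a < f b")
  case True
  then show ?thesis using lift_less_covers[OF assms] by simp
qed (use lift_matched[OF assms] in simp)

end

theorem mainTheorem7:
  fixes X :: "'a::order set" and f :: "'a \<Rightarrow> real"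
  assumes "finite X" and "graded X"
    and "morse_function X f" and "exclusion_condition X f"
  shows "\<exists>f' :: 'a \<Rightarrow> real. (\<forall>x\<in>X. \<forall>y\<in>X. x \<le> y \<longrightarrow> f' x \<le> f' y)
           \<and> morse_function X f' \<and> exclusion_condition X f'
           \<and> morse_matching X f' = morse_matching X f"
proof (intro exI conjI)
  interpret graded_exclusion_morse X f using assms by unfold_locales
  have same_data: "up_low X lift = up_low X f" "down_high X lift = down_high X f"
    "morse_matching X lift = morse_matching X f"
    using lift_cover_order_iff by (fact morse_data_eq_if_same_cover_order)+
  show "\<forall>x\<in>X. \<forall>y\<in>X. x \<le> y \<longrightarrow> lift x \<le> lift y"
    using monotone_if_monotone_on_covers[of X lift, OF assms(1) lift_le_covers] by blast
  show "morse_function X lift"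
    using assms(3) unfolding morse_function_def same_data .
  show "exclusion_condition X lift"
    using assms(4) unfolding exclusion_condition_def critical_def same_data .
  show "morse_matching X lift = morse_matching X f"
    by (rule same_data)
qed

end
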